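(* Let $\mathfrak{U}$ be a Banach algebra such that $\mathfrak{U}^\sharp$ is symmetrically pseudo-amenable. Let $Y$ be a Banach $\mathfrak{U}$-bimodule and $X$ a closed $\mathfrak{U}$-subbimodule of $Y$. If $\delta:\mathfrak{U}\to Y$ is a bounded derivation and $\tau:\mathfrak{U}\to\mathcal{Z}_{\mathfrak{U}}(Y)$ is a linear map such that $(\delta+\tau)(\mathfrak{U})\subseteq X$, then $\delta(\mathfrak{U})\subseteq X$ and $\tau(\mathfrak{U})\subseteq\mathcal{Z}_{\mathfrak{U}}(X)$.
   Context: $\mathfrak{U}^\sharp=\mathfrak{U}\oplus\mathbb{C}1$ is the unitization of $\mathfrak{U}$ with the $\ell^1$-norm (a unit is adjoined even if $\mathfrak{U}$ is unital). For a bimodule $Y$, $\mathcal{Z}_{\mathfrak{U}}(Y)=\{y\in Y: ay=ya \text{ for all } a\in\mathfrak{U}\}$. A derivation is a linear map with $\delta(ab)=\delta(a)b+a\delta(b)$. For a Banach algebra $\mathfrak{A}$, $\mathfrak{A}\widehat{\otimes}\mathfrak{A}$ is the projective tensor product with $a(b\otimes c)=ab\otimes c$, $(b\otimes c)a=b\otimes ca$, $\pi(b\otimes c)=bc$ (extended linearly and continuously); the flip is $(b\otimes c)^\circ=c\otimes b$ and $\mathbf{t}$ is symmetric if $\mathbf{t}^\circ=\mathbf{t}$. A symmetric approximate diagonal is a net $\{\mathbf{t}_\lambda\}$ (not necessarily bounded) of symmetric elements with $a\mathbf{t}_\lambda-\mathbf{t}_\lambda a\to0$ and $\pi(\mathbf{t}_\lambda)a\to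 a$ for all $a\in\mathfrak{A}$; $\mathfrak{A}$ is symmetrically pseudo-amenable if it has one. *)

theory Defs
  imports "HOL-Analysis.Analysis"
begin

class cnormed = real_normed_vector +
  fixes scaleC :: "complex \<Rightarrow> 'a \<Rightarrow> 'a"
  assumes scaleC_add_right: "scaleC c (x + y) = scaleC c x + scaleC c y"
    and scaleC_add_left: "scaleC (c + d) x = scaleC c x + scaleC d x"
    and scaleC_scaleC: "scaleC c (scaleC d x) = scaleC (c * d) x"
    and scaleC_of_real: "scaleC (of_real r) x = scaleR r x"
    and norm_scaleC: "norm (scaleC c x) = cmod c * norm x"

class cnormed_algebra = cnormed + real_normed_algebra +
  assumes mult_scaleC_left: "scaleC c x * y = scaleC c (x * y)"
    and mult_scaleC_right: "x * scaleC c y = scaleC c (x * y)"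

definition clinear_map :: "('a::cnormed \<Rightarrow> 'b::cnormed) \<Rightarrow> bool" where
  "clinear_map f \<longleftrightarrow> (\<forall>x y. f (x + y) = f x + f y) \<and> (\<forall>c x. f (scaleC c x) = scaleC c (f x))"

definition bounded_map :: "('a::real_normed_vector \<Rightarrow> 'b::real_normed_vector) \<Rightarrow> bool" where
  "bounded_map f \<longleftrightarrow> (\<exists>C. \<forall>x. norm (f x) \<le> C * norm x)"

text \<open>A Banach U-bimodule structure on Y (Y itself is assumed complete via its type class):
  left action lm, right action rm, both complex bilinear and jointly bounded,
  with the bimodule associativity laws.\<close>
definition banach_bimodule ::
  "('a::cnormed_algebra \<Rightarrow> 'y::cnormed \<Rightarrow> 'y) \<Rightarrow> ('y \<Rightarrow> 'a \<Rightarrow> 'y) \<Rightarrow> bool" where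
  "banach_bimodule lm rm \<longleftrightarrow>
     (\<forall>a b y. lm (a + b) y = lm a y + lm b y) \<and>
     (\<forall>a y z. lm a (y + z) = lm a y + lm a z) \<and>
     (\<forall>c a y. lm (scaleC c a) y = scaleC c (lm a y)) \<and>
     (\<forall>c a y. lm a (scaleC c y) = scaleC c (lm a y)) \<and>
     (\<forall>a b y. rm y (a + b) = rm y a + rm y b) \<and>
     (\<forall>a y z. rm (y + z) a = rm y a + rm z a) \<and>
     (\<forall>c a y. rm y (scaleC c a) = scaleC c (rm y a)) \<and>
     (\<forall>c a y. rm (scaleC c y) a = scaleC c (rm y a)) \<and>
     (\<forall>a b y. lm (a * b) y = lm a (lm b y)) \<and>
     (\<forall>a b y. rm y (a * b) = rm (rm y a) b) \<and>
     (\<forall>a b y. rm (lm a y) b = lm a (rm y b)) \<and>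
     (\<exists>K. \<forall>a y. norm (lm a y) \<le> K * norm a * norm y) \<and>
     (\<exists>K. \<forall>a y. norm (rm y a) \<le> K * norm a * norm y)"

definition closed_subbimodule ::
  "('a::cnormed_algebra \<Rightarrow> 'y::cnormed \<Rightarrow> 'y) \<Rightarrow> ('y \<Rightarrow> 'a \<Rightarrow> 'y) \<Rightarrow> 'y set \<Rightarrow> bool" where
  "closed_subbimodule lm rm X \<longleftrightarrow>
     0 \<in> X \<and> (\<forall>x\<in>X. \<forall>y\<in>X. x + y \<in> X) \<and> (\<forall>c. \<forall>x\<in>X. scaleC c x \<in> X) \<and>
     closed X \<and> (\<forall>a. \<forall>x\<in>X. lm a x \<in> X \<and> rm x a \<in> X)"

definition zcenter ::
  "('a \<Rightarrow> 'y \<Rightarrow> 'y) \<Rightarrow> ('y \<Rightarrow> 'a \<Rightarrow> 'y) \<Rightarrow> 'y set \<Rightarrow> 'y set" where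
  "zcenter lm rm S = {y \<in> S. \<forall>a. lm a y = rm y a}"

definition derivation ::
  "('a::cnormed_algebra \<Rightarrow> 'y::cnormed \<Rightarrow> 'y) \<Rightarrow> ('y \<Rightarrow> 'a \<Rightarrow> 'y) \<Rightarrow> ('a \<Rightarrow> 'y) \<Rightarrow> bool" where
  "derivation lm rm d \<longleftrightarrow> clinear_map d \<and> (\<forall>a b. d (a * b) = rm (d a) b + lm a (d b))"

text \<open>Elements of U# are pairs (a, alpha) standing for a + alpha 1; addition is componentwise.\<close>
definition us_mult :: "'a::cnormed_algebra \<times> complex \<Rightarrow> 'a \<times> complex \<Rightarrow> 'a \<times> complex" where
  "us_mult x y = (fst x * fst y + scaleC (snd x) (fst y) + scaleC (snd y) (fst x), snd x * snd y)"

definition us_scale :: "complex \<Rightarrow> 'a::cnormed_algebra \<times> complex \<Rightarrow> 'a \<times> complex" where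
  "us_scale c x = (scaleC c (fst x), c * snd x)"

definition us_norm :: "'a::cnormed_algebra \<times> complex \<Rightarrow> real" where
  "us_norm x = norm (fst x) + cmod (snd x)"

text \<open>Finite tensors are lists of elementary tensors [(b1,c1),...] meaning sum bi \<otimes> ci.
  Two finite tensors are equal in the algebraic tensor product iff every complex
  bilinear functional takes the same value on them (universal property).\<close>
definition us_cbilinear :: "('a::cnormed_algebra \<times> complex \<Rightarrow> 'a \<times> complex \<Rightarrow> complex) \<Rightarrow> bool" where
  "us_cbilinear \<phi> \<longleftrightarrow>
     (\<forall>x y z. \<phi> (x + y) z = \<phi> x z + \<phi> y z) \<and>
     (\<forall>x y z. \<phi> z (x + y) = \<phi> z x + \<phi> z y) \<and>
     (\<forall>c x z. \<phi> (us_scale c x) z = c * \<phi> x z) \<and>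
     (\<forall>c x z. \<phi> z (us_scale c x) = c * \<phi> z x)"

definition us_tens_eq ::
  "(('a::cnormed_algebra \<times> complex) \<times> ('a \<times> complex)) list \<Rightarrow> (('a \<times> complex) \<times> ('a \<times> complex)) list \<Rightarrow> bool" where
  "us_tens_eq xs ys \<longleftrightarrow>
     (\<forall>\<phi>. us_cbilinear \<phi> \<longrightarrow> sum_list (map (\<lambda>(b, c). \<phi> b c) xs) = sum_list (map (\<lambda>(b, c). \<phi> b c) ys))"

definition us_pnorm_fin :: "(('a::cnormed_algebra \<times> complex) \<times> ('a \<times> complex)) list \<Rightarrow> real" where
  "us_pnorm_fin xs = Inf {sum_list (map (\<lambda>(b, c). us_norm b * us_norm c) ys) | ys. us_tens_eq xs ys}"

text \<open>Elements of the completed projective tensor product are represented by sequences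
  t n = (b_n, c_n) with sum ||b_n|| ||c_n|| < \<infinity>, standing for sum b_n \<otimes> c_n.\<close>
definition us_tensor_rep :: "(nat \<Rightarrow> ('a::cnormed_algebra \<times> complex) \<times> ('a \<times> complex)) \<Rightarrow> bool" where
  "us_tensor_rep t \<longleftrightarrow> summable (\<lambda>n. us_norm (fst (t n)) * us_norm (snd (t n)))"

definition us_pnorm_lim :: "(nat \<Rightarrow> (('a::cnormed_algebra \<times> complex) \<times> ('a \<times> complex)) list) \<Rightarrow> real" where
  "us_pnorm_lim L = lim (\<lambda>N. us_pnorm_fin (L N))"

definition us_partial :: "(nat \<Rightarrow> ('a \<times> complex) \<times> ('a \<times> complex)) \<Rightarrow> nat \<Rightarrow> (('a \<times> complex) \<times> ('a \<times> complex)) list" where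
  "us_partial t N = map t [0..<N]"

text \<open>|| a t - t a ||_\<pi>\<close>
definition us_comm_norm :: "'a::cnormed_algebra \<times> complex \<Rightarrow> (nat \<Rightarrow> ('a \<times> complex) \<times> ('a \<times> complex)) \<Rightarrow> real" where
  "us_comm_norm a t = us_pnorm_lim (\<lambda>N.
      map (\<lambda>(b, c). (us_mult a b, c)) (us_partial t N) @ map (\<lambda>(b, c). (- b, us_mult c a)) (us_partial t N))"

text \<open>|| t - t\<degree> ||_\<pi>  (t is symmetric iff this is 0)\<close>
definition us_flip_norm :: "(nat \<Rightarrow> ('a::cnormed_algebra \<times> complex) \<times> ('a \<times> complex)) \<Rightarrow> real" where
  "us_flip_norm t = us_pnorm_lim (\<lambda>N. us_partial t N @ map (\<lambda>(b, c). (- c, b)) (us_partial t N))"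

definition us_symmetric :: "(nat \<Rightarrow> ('a::cnormed_algebra \<times> complex) \<times> ('a \<times> complex)) \<Rightarrow> bool" where
  "us_symmetric t \<longleftrightarrow> us_flip_norm t = 0"

definition us_pi :: "(nat \<Rightarrow> ('a::cnormed_algebra \<times> complex) \<times> ('a \<times> complex)) \<Rightarrow> 'a \<times> complex" where
  "us_pi t = (\<Sum>n. us_mult (fst (t n)) (snd (t n)))"

text \<open>A symmetric approximate diagonal for U#, as a net (filter F on an index type, t i
  the element at index i).\<close>
definition us_sym_approx_diag :: "'i filter \<Rightarrow> ('i \<Rightarrow> nat \<Rightarrow> ('a::cnormed_algebra \<times> complex) \<times> ('a \<times> complex)) \<Rightarrow> bool" where
  "us_sym_approx_diag F t \<longleftrightarrow>
     F \<noteq> bot \<and>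
     (\<forall>i. us_tensor_rep (t i) \<and> us_symmetric (t i)) \<and>
     (\<forall>a. ((\<lambda>i. us_comm_norm a (t i)) \<longlongrightarrow> 0) F) \<and>
     (\<forall>a. ((\<lambda>i. us_norm (us_mult (us_pi (t i)) a - a)) \<longlongrightarrow> 0) F)"

end

(*
  Put theta(b \<otimes> c) = \<delta>(b) c - b \<delta>(c) on the unitization U#; it is bounded and bilinear, so it
  extends to the projective tensor product.  It carries a t - t a to
  \<delta>(a) \<pi>(t) + \<pi>(t) \<delta>(a) + a theta(t) - theta(t) a.  As \<delta> + \<tau> maps into X and \<tau> is central,
  every commutator a \<delta>(b) - \<delta>(b) a lies in X; hence theta(t) + theta(t\<degree>) \<in> X, and theta(t) \<in> X
  for symmetric t.  Along a symmetric approximate diagonal t, a theta(t) - theta(t) a stays in X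
  while \<delta>(a) \<pi>(t) + \<pi>(t) \<delta>(a) tends to 2 \<delta>(a), so \<delta>(a) \<in> X as X is closed; finally
  \<tau>(a) = (\<delta> + \<tau>)(a) - \<delta>(a) \<in> X.
*)

theory Submission
  imports Defs
begin

section \<open>Complex scalars and bounded bilinear maps\<close>

lemma scaleC_one [simp]: "scaleC 1 x = (x::'a::cnormed)"
  using scaleC_of_real[of 1 x] by simp

global_interpretation cvec: vector_space "scaleC :: complex \<Rightarrow> 'a \<Rightarrow> 'a::cnormed"
  by unfold_locales (simp_all add: scaleC_add_right scaleC_add_left scaleC_scaleC)

lemma linear_functional_eq_1_exists:
  fixes v :: "'y::cnormed"
  assumes "v \<noteq> 0"
  obtains l :: "'y \<Rightarrow> complex" where "Vector_Spaces.linear scaleC (*) l" and "l v = 1"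
proof -
  interpret vector_space_pair "scaleC :: complex \<Rightarrow> 'y \<Rightarrow> 'y" "(*) :: complex \<Rightarrow> complex \<Rightarrow> complex"
    by unfold_locales (simp_all add: algebra_simps)
  have "cvec.independent {v}" using assms by simp
  from linear_independent_extend[OF this, of "\<lambda>_. 1"] that show thesis by auto
qed

lemma summable_comparison_complete:
  fixes f :: "nat \<Rightarrow> 'a::{real_normed_vector, complete_space}"
  assumes "summable g" and "\<And>n. norm (f n) \<le> g n"
  shows "summable f"
proof -
  have "Cauchy (\<lambda>n. \<Sum>i<n. f i)"
  proof (rule CauchyI)
    fix e :: real assume "0 < e"
    with \<open>summable g\<close> obtain N where N: "\<And>m n. m \<ge> N \<Longrightarrow> norm (sum g {m..<n}) < e"
      unfolding summable_Cauchy by blast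
    have "norm ((\<Sum>i<n. f i) - (\<Sum>i<m. f i)) < e" if "N \<le> m" "m \<le> n" for m n
    proof -
      have "norm ((\<Sum>i<n. f i) - (\<Sum>i<m. f i)) = norm (sum f {m..<n})"
        using sum_diff_nat_ivl[of 0 m n f] that(2) by (simp add: atLeast0LessThan)
      also have "\<dots> \<le> sum g {m..<n}" by (rule sum_norm_le) (rule assms(2))
      also have "\<dots> < e" using N[OF that(1), of n] by simp
      finally show ?thesis .
    qed
    then show "\<exists>M. \<forall>m\<ge>M. \<forall>n\<ge>M. norm ((\<Sum>i<m. f i) - (\<Sum>i<n. f i)) < e"
      by (metis nle_le norm_minus_commute)
  qed
  then show ?thesis by (simp add: summable_iff_convergent Cauchy_convergent_iff)
qed

lemma closed_subbimodule_subspace: "closed_subbimodule lm rm X \<Longrightarrow> cvec.subspace X"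
  unfolding closed_subbimodule_def cvec.subspace_def by blast

lemma scaleC_half_double: "scaleC (1/2) (x + x) = (x::'a::cnormed)"
  by (simp add: scaleC_add_right flip: scaleC_add_left)

lemma bounded_bilinear_add:
  assumes "bounded_bilinear f" and "bounded_bilinear g"
  shows "bounded_bilinear (\<lambda>x y. f x y + g x y)"
proof -
  interpret f: bounded_bilinear f by fact
  interpret g: bounded_bilinear g by fact
  obtain K L where "\<And>a b. norm (f a b) \<le> norm a * norm b * K" "\<And>a b. norm (g a b) \<le> norm a * norm b * L"
    using f.bounded g.bounded by blast
  then have "norm (f a b + g a b) \<le> norm a * norm b * (K + L)" for a b
    by (smt (verit) distrib_left norm_triangle_ineq)
  then show ?thesis
    by unfold_locales (auto simp: f.add_left f.add_right g.add_left g.add_right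
        f.scaleR_left f.scaleR_right g.scaleR_left g.scaleR_right scaleR_right_distrib)
qed

lemma bounded_bilinear_scaleC: "bounded_bilinear (scaleC :: complex \<Rightarrow> 'a \<Rightarrow> 'a::cnormed)"
proof unfold_locales
  show "\<exists>K. \<forall>c x. norm (scaleC c x) \<le> norm c * norm x * K"
    by (intro exI[of _ 1]) (simp add: norm_scaleC)
qed (simp_all add: scaleC_add_left scaleC_add_right scaleC_scaleC scaleR_conv_of_real
      mult.commute flip: scaleC_of_real)

lemma bounded_bilinear_unitization:
  fixes p :: "'a::cnormed \<Rightarrow> 'y::cnormed \<Rightarrow> 'y"
  assumes "bounded_bilinear p"
  shows "bounded_bilinear (\<lambda>x v. p (fst x) v + scaleC (snd x) v)"
  using bounded_bilinear_add[OF bounded_bilinear.comp1[OF assms bounded_linear_fst]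
      bounded_bilinear.comp1[OF bounded_bilinear_scaleC bounded_linear_snd]] .

section \<open>The unitization and its projective tensor product\<close>

lemma norm_le_us_norm: "norm x \<le> us_norm x"
  unfolding us_norm_def by (metis norm_Pair_le prod.collapse)

lemma us_norm_nonneg: "0 \<le> us_norm x"
  by (simp add: us_norm_def)

lemma us_norm_minus [simp]: "us_norm (- x) = us_norm x"
  by (simp add: us_norm_def)

lemma us_norm_us_mult_le: "us_norm (us_mult x y) \<le> us_norm x * us_norm y"
proof -
  obtain a \<alpha> b \<beta> where x: "x = (a, \<alpha>)" and y: "y = (b, \<beta>)" by fastforce
  have "norm (a * b + scaleC \<alpha> b + scaleC \<beta> a) \<le> norm a * norm b + cmod \<alpha> * norm b + cmod \<beta> * norm a"
    by (smt (verit) norm_mult_ineq norm_scaleC norm_triangle_ineq)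
  then show ?thesis
    by (simp add: x y us_mult_def us_norm_def norm_mult algebra_simps)
qed

lemma norm_us_mult_le: "norm (us_mult b c) \<le> us_norm b * us_norm c"
  using norm_le_us_norm us_norm_us_mult_le order_trans by blast

lemma us_mult_unit_right [simp]: "us_mult x (0, 1) = x"
  by (simp add: us_mult_def)

definition tensor_eval :: "('b \<Rightarrow> 'c \<Rightarrow> 'd::comm_monoid_add) \<Rightarrow> ('b \<times> 'c) list \<Rightarrow> 'd" where
  "tensor_eval h xs = sum_list (map (\<lambda>(b, c). h b c) xs)"

definition rep_norm :: "(('a::cnormed_algebra \<times> complex) \<times> ('a \<times> complex)) list \<Rightarrow> real" where
  "rep_norm = tensor_eval (\<lambda>b c. us_norm b * us_norm c)"

lemma tensor_eval_Nil [simp]: "tensor_eval h [] = 0"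
  by (simp add: tensor_eval_def)

lemma tensor_eval_Cons [simp]: "tensor_eval h (x # xs) = h (fst x) (snd x) + tensor_eval h xs"
  by (simp add: tensor_eval_def split_beta)

lemma tensor_eval_append [simp]: "tensor_eval h (xs @ ys) = tensor_eval h xs + tensor_eval h ys"
  by (simp add: tensor_eval_def)

lemma tensor_eval_concat_upt:
  "tensor_eval h (concat (map g [N..<M])) = (\<Sum>n = N..<M. tensor_eval h (g n))"
  by (induction M) simp_all

lemma tensor_eval_interleave:
  "tensor_eval h (map p xs @ map q xs) = tensor_eval h (concat (map (\<lambda>x. [p x, q x]) xs))"
proof (induction xs)
  case (Cons x xs)
  then show ?case by (simp add: ac_simps flip: Cons.IH)
qed simp

lemma us_tens_eq_iff: "us_tens_eq xs ys \<longleftrightarrow> (\<forall>\<phi>. us_cbilinear \<phi> \<longrightarrow> tensor_eval \<phi> xs = tensor_eval \<phi> ys)"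
  by (simp add: us_tens_eq_def tensor_eval_def)

lemma us_cbilinear_minus_left:
  assumes "us_cbilinear \<phi>"
  shows "\<phi> (- b) c = - \<phi> b c"
proof -
  have "- b = us_scale (-1) b"
    by (simp add: us_scale_def prod_eq_iff)
  moreover have "\<phi> (us_scale (-1) b) c = -1 * \<phi> b c"
    using assms unfolding us_cbilinear_def by blast
  ultimately show ?thesis by simp
qed

lemma rep_norm_nonneg: "0 \<le> rep_norm xs"
  unfolding rep_norm_def by (induction xs) (simp_all add: us_norm_nonneg)

lemma rep_norm_append [simp]: "rep_norm (xs @ ys) = rep_norm xs + rep_norm ys"
  by (simp add: rep_norm_def)

lemma us_pnorm_fin_eq_Inf: "us_pnorm_fin xs = Inf {rep_norm ys |ys. us_tens_eq xs ys}"
  by (simp add: us_pnorm_fin_def rep_norm_def tensor_eval_def)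

lemma us_pnorm_fin_le: "us_pnorm_fin xs \<le> rep_norm xs"
  unfolding us_pnorm_fin_eq_Inf
  by (rule cInf_lower) (auto simp: us_tens_eq_def intro!: bdd_belowI[of _ 0] rep_norm_nonneg)

lemma us_pnorm_fin_greatest:
  "(\<And>ys. us_tens_eq xs ys \<Longrightarrow> m \<le> rep_norm ys) \<Longrightarrow> m \<le> us_pnorm_fin xs"
  unfolding us_pnorm_fin_eq_Inf by (rule cInf_greatest) (auto simp: us_tens_eq_def)

lemma us_pnorm_fin_cong:
  assumes "us_tens_eq xs ys"
  shows "us_pnorm_fin xs = us_pnorm_fin ys"
proof -
  have "us_tens_eq xs zs \<longleftrightarrow> us_tens_eq ys zs" for zs
    using assms by (auto simp: us_tens_eq_def)
  then show ?thesis
    unfolding us_pnorm_fin_eq_Inf by simp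
qed

lemma us_pnorm_fin_append_le: "us_pnorm_fin (xs @ ys) \<le> us_pnorm_fin xs + us_pnorm_fin ys"
proof -
  have "us_pnorm_fin (xs @ ys) \<le> rep_norm xs' + rep_norm ys'"
    if "us_tens_eq xs xs'" "us_tens_eq ys ys'" for xs' ys'
  proof -
    have "us_tens_eq (xs @ ys) (xs' @ ys')"
      using that by (simp add: us_tens_eq_iff)
    then show ?thesis
      using us_pnorm_fin_le[of "xs' @ ys'"] by (simp add: us_pnorm_fin_cong)
  qed
  then have "us_pnorm_fin (xs @ ys) - rep_norm ys' \<le> us_pnorm_fin xs" if "us_tens_eq ys ys'" for ys'
    using that by (force intro!: us_pnorm_fin_greatest)
  then have "us_pnorm_fin (xs @ ys) - us_pnorm_fin xs \<le> us_pnorm_fin ys"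
    by (force intro!: us_pnorm_fin_greatest)
  then show ?thesis by simp
qed

lemma us_pnorm_fin_concat_dist:
  assumes "N \<le> M"
  shows "\<bar>us_pnorm_fin (concat (map g [0..<M])) - us_pnorm_fin (concat (map g [0..<N]))\<bar>
    \<le> (\<Sum>n = N..<M. rep_norm (g n))"
proof -
  define S R where "S = concat (map g [0..<N])" and "R = concat (map g [N..<M])"
  have SR: "concat (map g [0..<M]) = S @ R"
    using assms upt_add_eq_append[of 0 N "M - N"] by (simp add: S_def R_def)
  have R: "rep_norm R = (\<Sum>n = N..<M. rep_norm (g n))"
    by (simp add: R_def rep_norm_def tensor_eval_concat_upt)
  define negR where "negR = map (\<lambda>(b, c). (- b, c)) R"
  have "tensor_eval \<phi> negR = - tensor_eval \<phi> R" if "us_cbilinear \<phi>" for \<phi>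
    unfolding negR_def by (induction R) (simp_all add: us_cbilinear_minus_left[OF that] split_beta)
  then have "us_tens_eq S (S @ R @ negR)"
    by (simp add: us_tens_eq_iff)
  moreover have "rep_norm negR = rep_norm R"
    unfolding negR_def rep_norm_def by (induction R) (simp_all add: split_beta)
  ultimately have "us_pnorm_fin S \<le> us_pnorm_fin (S @ R) + rep_norm R"
    using us_pnorm_fin_append_le[of "S @ R" negR] us_pnorm_fin_le[of negR]
    by (simp add: us_pnorm_fin_cong)
  moreover have "us_pnorm_fin (S @ R) \<le> us_pnorm_fin S + rep_norm R"
    using us_pnorm_fin_append_le[of S R] us_pnorm_fin_le[of R] by simp
  ultimately show ?thesis
    unfolding SR R[symmetric] S_def[symmetric] by linarith
qed

lemma us_pnorm_fin_concat_convergent: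
  assumes "summable (\<lambda>n. rep_norm (g n))"
  shows "convergent (\<lambda>N. us_pnorm_fin (concat (map g [0..<N])))"
proof -
  define P where "P = (\<lambda>N. us_pnorm_fin (concat (map g [0..<N])))"
  have "Cauchy P"
  proof (rule CauchyI)
    fix e :: real assume "0 < e"
    with assms obtain K where K: "\<And>m n. m \<ge> K \<Longrightarrow> norm (\<Sum>n = m..<n. rep_norm (g n)) < e"
      unfolding summable_Cauchy by blast
    have "\<bar>P M - P N\<bar> < e" if "K \<le> N" "N \<le> M" for N M
      using us_pnorm_fin_concat_dist[OF that(2), of g] K[OF that(1), of M] unfolding P_def by simp
    then show "\<exists>M. \<forall>m\<ge>M. \<forall>n\<ge>M. norm (P m - P n) < e"
      by (metis abs_minus_commute nle_le real_norm_def)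
  qed
  then show ?thesis
    by (simp add: P_def Cauchy_convergent_iff)
qed

lemma us_pnorm_fin_tendsto_lim:
  assumes "\<And>N. us_tens_eq (L N) (concat (map g [0..<N]))"
    and "summable (\<lambda>n. rep_norm (g n))"
  shows "(\<lambda>N. us_pnorm_fin (L N)) \<longlonglongrightarrow> us_pnorm_lim L"
  using us_pnorm_fin_concat_convergent[OF assms(2)]
  by (simp add: us_pnorm_lim_def us_pnorm_fin_cong[OF assms(1)] convergent_LIMSEQ_iff)

definition us_cbilinear_map :: "('a::cnormed_algebra \<times> complex \<Rightarrow> 'a \<times> complex \<Rightarrow> 'y::cnormed) \<Rightarrow> bool" where
  "us_cbilinear_map h \<longleftrightarrow>
     (\<forall>x y z. h (x + y) z = h x z + h y z) \<and>
     (\<forall>x y z. h z (x + y) = h z x + h z y) \<and>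
     (\<forall>c x z. h (us_scale c x) z = scaleC c (h x z)) \<and>
     (\<forall>c x z. h z (us_scale c x) = scaleC c (h z x))"

lemma tensor_eval_cong:
  fixes h :: "'a::cnormed_algebra \<times> complex \<Rightarrow> 'a \<times> complex \<Rightarrow> 'y::cnormed"
  assumes h: "us_cbilinear_map h" and "us_tens_eq xs ys"
  shows "tensor_eval h xs = tensor_eval h ys"
proof (rule ccontr)
  \<comment> \<open>Complex functionals separate points, reducing to the scalar universal property.\<close>
  assume "tensor_eval h xs \<noteq> tensor_eval h ys"
  then obtain l where l: "Vector_Spaces.linear scaleC (*) l"
    and l1: "l (tensor_eval h xs - tensor_eval h ys) = 1"
    by (metis linear_functional_eq_1_exists right_minus_eq)
  interpret l: Vector_Spaces.linear "scaleC :: complex \<Rightarrow> 'y \<Rightarrow> 'y" "(*)" l by (fact l)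
  have "us_cbilinear (\<lambda>b c. l (h b c))"
    using h by (simp add: us_cbilinear_def us_cbilinear_map_def l.add l.scale)
  moreover have "l (tensor_eval h zs) = tensor_eval (\<lambda>b c. l (h b c)) zs" for zs
    by (induction zs) (simp_all add: l.add)
  ultimately have "l (tensor_eval h xs - tensor_eval h ys) = 0"
    using \<open>us_tens_eq xs ys\<close> by (simp add: us_tens_eq_iff l.diff)
  with l1 show False by simp
qed

lemma norm_tensor_eval_le:
  assumes h: "us_cbilinear_map h" and "0 < C"
    and bound: "\<And>b c. norm (h b c) \<le> C * (us_norm b * us_norm c)"
  shows "norm (tensor_eval h xs) \<le> C * us_pnorm_fin xs"
proof -
  have rep: "norm (tensor_eval h ys) \<le> C * rep_norm ys" for ys
  proof (induction ys)
    case (Cons y ys)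
    then show ?case
      using order_trans[OF norm_triangle_ineq add_mono[OF bound Cons.IH]]
      by (simp add: rep_norm_def distrib_left)
  qed (simp add: rep_norm_def)
  have "norm (tensor_eval h xs) / C \<le> us_pnorm_fin xs"
    using rep \<open>0 < C\<close> tensor_eval_cong[OF h]
    by (intro us_pnorm_fin_greatest) (simp add: divide_le_eq mult.commute)
  then show ?thesis
    using \<open>0 < C\<close> by (simp add: divide_le_eq mult.commute)
qed

lemma summable_tensor_rep:
  fixes h :: "'a::cnormed_algebra \<times> complex \<Rightarrow> 'a \<times> complex \<Rightarrow> 'z::{real_normed_vector, complete_space}"
  assumes "us_tensor_rep t" and "\<And>b c. norm (h b c) \<le> C * (us_norm b * us_norm c)"
  shows "summable (\<lambda>n. h (fst (t n)) (snd (t n)))"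
  using summable_mult[OF assms(1)[unfolded us_tensor_rep_def], of C] assms(2)
  by (rule summable_comparison_complete)

lemma us_partial_interleave:
  "us_tens_eq (map p (us_partial t N) @ map q (us_partial t N)) (concat (map (\<lambda>n. [p (t n), q (t n)]) [0..<N]))"
  unfolding us_tens_eq_iff us_partial_def tensor_eval_interleave by (simp add: comp_def)

definition us_comm_tensor ::
  "'a::cnormed_algebra \<times> complex \<Rightarrow> (nat \<Rightarrow> ('a \<times> complex) \<times> ('a \<times> complex)) \<Rightarrow> nat
     \<Rightarrow> (('a \<times> complex) \<times> ('a \<times> complex)) list" where
  "us_comm_tensor a t N =
     map (\<lambda>(b, c). (us_mult a b, c)) (us_partial t N) @ map (\<lambda>(b, c). (- b, us_mult c a)) (us_partial t N)"

definition us_flip_tensor ::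
  "(nat \<Rightarrow> ('a::cnormed_algebra \<times> complex) \<times> ('a \<times> complex)) \<Rightarrow> nat
     \<Rightarrow> (('a \<times> complex) \<times> ('a \<times> complex)) list" where
  "us_flip_tensor t N = us_partial t N @ map (\<lambda>(b, c). (- c, b)) (us_partial t N)"

lemma us_comm_tensor_eq_concat:
  "us_tens_eq (us_comm_tensor a t N)
     (concat (map (\<lambda>n. [(us_mult a (fst (t n)), snd (t n)), (- fst (t n), us_mult (snd (t n)) a)]) [0..<N]))"
  using us_partial_interleave[of "\<lambda>(b, c). (us_mult a b, c)" t N "\<lambda>(b, c). (- b, us_mult c a)"]
  by (simp add: us_comm_tensor_def case_prod_beta)

lemma us_flip_tensor_eq_concat:
  "us_tens_eq (us_flip_tensor t N) (concat (map (\<lambda>n. [t n, (- snd (t n), fst (t n))]) [0..<N]))"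
  using us_partial_interleave[of "\<lambda>x. x" t N "\<lambda>(b, c). (- c, b)"]
  by (simp add: us_flip_tensor_def case_prod_beta)

lemma us_comm_tensor_tendsto:
  assumes t: "us_tensor_rep t"
  shows "(\<lambda>N. us_pnorm_fin (us_comm_tensor a t N)) \<longlonglongrightarrow> us_comm_norm a t"
proof -
  define g where "g n = [(us_mult a (fst (t n)), snd (t n)), (- fst (t n), us_mult (snd (t n)) a)]" for n
  have g_bound: "rep_norm (g n) \<le> 2 * us_norm a * (us_norm (fst (t n)) * us_norm (snd (t n)))" for n
    using mult_right_mono[OF us_norm_us_mult_le[of a "fst (t n)"] us_norm_nonneg[of "snd (t n)"]]
      mult_left_mono[OF us_norm_us_mult_le[of "snd (t n)" a] us_norm_nonneg[of "fst (t n)"]]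
    by (simp add: g_def rep_norm_def algebra_simps)
  have "summable (\<lambda>n. 2 * us_norm a * (us_norm (fst (t n)) * us_norm (snd (t n))))"
    using t unfolding us_tensor_rep_def by (rule summable_mult)
  then have "summable (\<lambda>n. rep_norm (g n))"
    by (rule summable_comparison_test'[where N = 0]) (simp add: rep_norm_nonneg g_bound)
  then show ?thesis
    using us_pnorm_fin_tendsto_lim[OF us_comm_tensor_eq_concat[of a t]]
    by (simp add: g_def us_comm_norm_def us_comm_tensor_def[abs_def])
qed

lemma us_flip_tensor_tendsto:
  assumes t: "us_tensor_rep t" and "us_symmetric t"
  shows "(\<lambda>N. us_pnorm_fin (us_flip_tensor t N)) \<longlonglongrightarrow> 0"
proof -
  define g where "g n = [t n, (- snd (t n), fst (t n))]" for n
  have "rep_norm (g n) = 2 * (us_norm (fst (t n)) * us_norm (snd (t n)))" for n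
    by (simp add: g_def rep_norm_def)
  then have "summable (\<lambda>n. rep_norm (g n))"
    using summable_mult[OF t[unfolded us_tensor_rep_def], of 2] by presburger
  then show ?thesis
    using us_pnorm_fin_tendsto_lim[OF us_flip_tensor_eq_concat[of t]] \<open>us_symmetric t\<close>
    by (simp add: g_def us_symmetric_def us_flip_norm_def us_flip_tensor_def[abs_def])
qed

lemma us_pi_tendsto_unit:
  assumes "us_sym_approx_diag F t"
  shows "((\<lambda>i. us_pi (t i)) \<longlongrightarrow> (0, 1)) F"
proof -
  have "((\<lambda>i. us_norm (us_mult (us_pi (t i)) (0, 1) - (0, 1))) \<longlongrightarrow> 0) F"
    using assms unfolding us_sym_approx_diag_def by blast
  then have "((\<lambda>i. us_pi (t i) - (0, 1)) \<longlongrightarrow> 0) F"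
    by (rule Lim_null_comparison[OF always_eventually, rotated]) (simp add: norm_le_us_norm)
  then show ?thesis
    by (rule Lim_null[THEN iffD2])
qed

section \<open>Banach bimodules and derivations\<close>

locale banach_bimod =
  fixes lm :: "'a::cnormed_algebra \<Rightarrow> 'y::cnormed \<Rightarrow> 'y" and rm :: "'y \<Rightarrow> 'a \<Rightarrow> 'y"
  assumes banach_bimodule: "banach_bimodule lm rm"
begin

lemma
  shows lm_add_left: "lm (a + b) y = lm a y + lm b y"
    and lm_add_right: "lm a (y + z) = lm a y + lm a z"
    and lm_scaleC_left: "lm (scaleC c a) y = scaleC c (lm a y)"
    and lm_scaleC_right: "lm a (scaleC c y) = scaleC c (lm a y)"
    and rm_add_right: "rm y (a + b) = rm y a + rm y b"
    and rm_add_left: "rm (y + z) a = rm y a + rm z a"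
    and rm_scaleC_right: "rm y (scaleC c a) = scaleC c (rm y a)"
    and rm_scaleC_left: "rm (scaleC c y) a = scaleC c (rm y a)"
    and lm_mult: "lm (a * b) y = lm a (lm b y)"
    and rm_mult: "rm y (a * b) = rm (rm y a) b"
    and rm_lm: "rm (lm a y) b = lm a (rm y b)"
    and lm_bounded: "\<exists>K. \<forall>a y. norm (lm a y) \<le> K * norm a * norm y"
    and rm_bounded: "\<exists>K. \<forall>a y. norm (rm y a) \<le> K * norm a * norm y"
  using banach_bimodule unfolding banach_bimodule_def by simp_all

sublocale lm: bounded_bilinear lm
proof unfold_locales
  show "\<exists>K. \<forall>a y. norm (lm a y) \<le> norm a * norm y * K"
    using lm_bounded by (metis mult.commute mult.left_commute)
qed (simp_all add: lm_add_left lm_add_right lm_scaleC_left lm_scaleC_right flip: scaleC_of_real)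

sublocale rm: bounded_bilinear rm
proof unfold_locales
  show "\<exists>K. \<forall>y a. norm (rm y a) \<le> norm y * norm a * K"
    using rm_bounded by (metis mult.commute mult.left_commute)
qed (simp_all add: rm_add_left rm_add_right rm_scaleC_left rm_scaleC_right flip: scaleC_of_real)

definition ulm :: "'a \<times> complex \<Rightarrow> 'y \<Rightarrow> 'y" where
  "ulm x v = lm (fst x) v + scaleC (snd x) v"

definition urm :: "'y \<Rightarrow> 'a \<times> complex \<Rightarrow> 'y" where
  "urm v x = rm v (fst x) + scaleC (snd x) v"

sublocale ulm: bounded_bilinear ulm
  unfolding ulm_def[abs_def] by (rule bounded_bilinear_unitization[OF lm.bounded_bilinear_axioms])

sublocale urm: bounded_bilinear urm
  unfolding urm_def[abs_def]
  by (rule bounded_bilinear.flip[OF bounded_bilinear_unitization[OF rm.flip]])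

lemma ulm_us_scale: "ulm (us_scale c x) v = scaleC c (ulm x v)"
  by (simp add: ulm_def us_scale_def lm_scaleC_left scaleC_add_right scaleC_scaleC)

lemma ulm_scaleC: "ulm x (scaleC c v) = scaleC c (ulm x v)"
  by (simp add: ulm_def lm_scaleC_right scaleC_add_right scaleC_scaleC mult.commute)

lemma urm_us_scale: "urm v (us_scale c x) = scaleC c (urm v x)"
  by (simp add: urm_def us_scale_def rm_scaleC_right scaleC_add_right scaleC_scaleC)

lemma urm_scaleC: "urm (scaleC c v) x = scaleC c (urm v x)"
  by (simp add: urm_def rm_scaleC_left scaleC_add_right scaleC_scaleC mult.commute)

lemma ulm_us_mult: "ulm (us_mult x y) v = ulm x (ulm y v)"
  by (simp add: ulm_def us_mult_def lm_add_left lm_add_right lm_scaleC_left lm_scaleC_right lm_mult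
      scaleC_add_left scaleC_add_right scaleC_scaleC algebra_simps)

lemma urm_us_mult: "urm v (us_mult x y) = urm (urm v x) y"
  by (simp add: urm_def us_mult_def rm_add_left rm_add_right rm_scaleC_left rm_scaleC_right rm_mult
      scaleC_add_left scaleC_add_right scaleC_scaleC algebra_simps)

lemma urm_ulm: "urm (ulm x v) y = ulm x (urm v y)"
  by (simp add: urm_def ulm_def rm_add_left rm_scaleC_left rm_lm lm_add_right lm_scaleC_right
      scaleC_add_right scaleC_scaleC algebra_simps)

lemma ulm_unit [simp]: "ulm (0, 1) v = v"
  by (simp add: ulm_def lm.zero_left)

lemma urm_unit [simp]: "urm v (0, 1) = v"
  by (simp add: urm_def rm.zero_right)

lemma ulm_urm_diff: "ulm x v - urm v x = lm (fst x) v - rm v (fst x)"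
  by (simp add: ulm_def urm_def)

lemma
  assumes "closed_subbimodule lm rm X" and "v \<in> X"
  shows ulm_mem: "ulm x v \<in> X" and urm_mem: "urm v x \<in> X"
  using assms closed_subbimodule_subspace[OF assms(1)]
  unfolding ulm_def urm_def closed_subbimodule_def
  by (simp_all add: cvec.subspace_add cvec.subspace_scale)

end

locale bimod_derivation = banach_bimod lm rm
  for lm :: "'a::{cnormed_algebra, complete_space} \<Rightarrow> 'y::{cnormed, complete_space} \<Rightarrow> 'y"
    and rm :: "'y \<Rightarrow> 'a \<Rightarrow> 'y" +
  fixes \<delta> :: "'a \<Rightarrow> 'y"
  assumes derivation: "derivation lm rm \<delta>" and bounded: "bounded_map \<delta>"
begin

lemma
  shows \<delta>_add: "\<delta> (a + b) = \<delta> a + \<delta> b"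
    and \<delta>_scaleC: "\<delta> (scaleC c a) = scaleC c (\<delta> a)"
    and \<delta>_mult: "\<delta> (a * b) = rm (\<delta> a) b + lm a (\<delta> b)"
  using derivation unfolding derivation_def clinear_map_def by simp_all

sublocale \<delta>: bounded_linear \<delta>
proof
  show "\<exists>K. \<forall>x. norm (\<delta> x) \<le> norm x * K"
    using bounded unfolding bounded_map_def by (metis mult.commute)
qed (simp_all add: \<delta>_add \<delta>_scaleC flip: scaleC_of_real)

definition ud :: "'a \<times> complex \<Rightarrow> 'y" where
  "ud x = \<delta> (fst x)"

lemma bounded_linear_ud: "bounded_linear ud"
  unfolding ud_def[abs_def] by (rule bounded_linear_compose[OF \<delta>.bounded_linear_axioms bounded_linear_fst])

lemma ud_us_mult: "ud (us_mult x y) = urm (ud x) y + ulm x (ud y)"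
  by (simp add: ud_def us_mult_def urm_def ulm_def \<delta>_add \<delta>_scaleC \<delta>_mult algebra_simps)

lemma ud_us_scale: "ud (us_scale c x) = scaleC c (ud x)"
  by (simp add: ud_def us_scale_def \<delta>_scaleC)

definition theta :: "'a \<times> complex \<Rightarrow> 'a \<times> complex \<Rightarrow> 'y" where
  "theta b c = urm (ud b) c - ulm b (ud c)"

lemma bounded_bilinear_theta: "bounded_bilinear theta"
proof -
  have "bounded_bilinear (\<lambda>b c. urm (ud b) c + ulm (- b) (ud c))"
    by (intro bounded_bilinear_add urm.comp ulm.comp bounded_linear_ud bounded_linear_minus
        bounded_linear_ident)
  then show ?thesis
    by (simp add: theta_def[abs_def] ulm.minus_left)
qed

lemma theta_bounded: obtains C where "0 < C" and "\<And>b c. norm (theta b c) \<le> C * (us_norm b * us_norm c)"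
proof -
  obtain K where "0 < K" and K: "\<And>b c. norm (theta b c) \<le> norm b * norm c * K"
    using bounded_bilinear.pos_bounded[OF bounded_bilinear_theta] by blast
  have "norm b * norm c * K \<le> us_norm b * us_norm c * K" for b c
    using \<open>0 < K\<close> by (intro mult_right_mono mult_mono norm_le_us_norm) (auto simp: us_norm_nonneg)
  then have "norm (theta b c) \<le> K * (us_norm b * us_norm c)" for b c
    by (metis K mult.commute order_trans)
  with \<open>0 < K\<close> show thesis by (rule that)
qed

lemma us_cbilinear_map_theta: "us_cbilinear_map theta"
  using bounded_bilinear.add_left[OF bounded_bilinear_theta] bounded_bilinear.add_right[OF bounded_bilinear_theta]
  by (simp add: us_cbilinear_map_def theta_def ud_us_scale urm_us_scale urm_scaleC ulm_us_scale
      ulm_scaleC cvec.scale_right_diff_distrib)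

lemma ud_minus: "ud (- x) = - ud x"
  by (simp add: ud_def \<delta>.neg)

lemma theta_commutator:
  "theta (us_mult a b) c + theta (- b) (us_mult c a)
     = urm (ud a) (us_mult b c) + ulm (us_mult b c) (ud a) + ulm a (theta b c) - urm (theta b c) a"
  by (simp add: theta_def ud_us_mult ulm_us_mult urm_us_mult urm_ulm ulm.add_right ulm.diff_right
      urm.add_left urm.diff_left ulm.minus_left urm.minus_left ud_minus
      algebra_simps)

definition theta_tensor :: "(nat \<Rightarrow> ('a \<times> complex) \<times> ('a \<times> complex)) \<Rightarrow> 'y" where
  "theta_tensor t = (\<Sum>n. theta (fst (t n)) (snd (t n)))"

lemma norm_theta_commutator_le:
  assumes t: "us_tensor_rep t" and "0 < C" and C: "\<And>b c. norm (theta b c) \<le> C * (us_norm b * us_norm c)"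
  shows "norm (urm (ud a) (us_pi t) + ulm (us_pi t) (ud a) + ulm a (theta_tensor t) - urm (theta_tensor t) a)
    \<le> C * us_comm_norm a t"
proof -
  define P where "P N = (\<Sum>n<N. us_mult (fst (t n)) (snd (t n)))" for N
  define \<Theta> where "\<Theta> N = (\<Sum>n<N. theta (fst (t n)) (snd (t n)))" for N
  have eval: "tensor_eval theta (us_comm_tensor a t N)
      = urm (ud a) (P N) + ulm (P N) (ud a) + ulm a (\<Theta> N) - urm (\<Theta> N) a" for N
    using tensor_eval_cong[OF us_cbilinear_map_theta us_comm_tensor_eq_concat]
    by (simp add: tensor_eval_concat_upt atLeast0LessThan theta_commutator P_def \<Theta>_def
        sum.distrib sum_subtractf urm.sum_right ulm.sum_left ulm.sum_right urm.sum_left)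
  have "P \<longlonglongrightarrow> us_pi t"
    unfolding P_def us_pi_def using norm_us_mult_le
    by (intro summable_LIMSEQ summable_tensor_rep[OF t, of _ 1]) simp
  moreover have "\<Theta> \<longlonglongrightarrow> theta_tensor t"
    unfolding \<Theta>_def theta_tensor_def by (intro summable_LIMSEQ summable_tensor_rep[OF t C])
  ultimately have "(\<lambda>N. tensor_eval theta (us_comm_tensor a t N))
      \<longlonglongrightarrow> urm (ud a) (us_pi t) + ulm (us_pi t) (ud a) + ulm a (theta_tensor t) - urm (theta_tensor t) a"
    unfolding eval by (intro tendsto_intros urm.tendsto ulm.tendsto)
  then show ?thesis
    using norm_tensor_eval_le[OF us_cbilinear_map_theta \<open>0 < C\<close> C]
    by (intro tendsto_le[OF _ tendsto_mult[OF tendsto_const us_comm_tensor_tendsto[OF t]] tendsto_norm])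
      auto
qed

lemma theta_flip_mem:
  assumes X: "closed_subbimodule lm rm X" and inner: "\<And>a b. lm a (\<delta> b) - rm (\<delta> b) a \<in> X"
  shows "theta (- c) b - theta b c \<in> X"
proof -
  have "theta (- c) b - theta b c = (ulm c (ud b) - urm (ud b) c) + (ulm b (ud c) - urm (ud c) b)"
    by (simp add: theta_def ud_minus ulm.minus_left urm.minus_left)
  then show ?thesis
    using inner cvec.subspace_add[OF closed_subbimodule_subspace[OF X]]
    by (simp add: ulm_urm_diff ud_def)
qed

lemma theta_tensor_mem:
  assumes X: "closed_subbimodule lm rm X" and inner: "\<And>a b. lm a (\<delta> b) - rm (\<delta> b) a \<in> X"
    and t: "us_tensor_rep t" and sym: "us_symmetric t"
  shows "theta_tensor t \<in> X"
proof -
  have subspace: "cvec.subspace X" by (rule closed_subbimodule_subspace[OF X])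
  obtain C where "0 < C" and C: "\<And>b c. norm (theta b c) \<le> C * (us_norm b * us_norm c)"
    using theta_bounded by blast
  have "(\<lambda>N. C * us_pnorm_fin (us_flip_tensor t N)) \<longlonglongrightarrow> 0"
    by (rule tendsto_mult_right_zero[OF us_flip_tensor_tendsto[OF t sym]])
  then have eval0: "(\<lambda>N. tensor_eval theta (us_flip_tensor t N)) \<longlonglongrightarrow> 0"
    by (rule Lim_null_comparison[OF always_eventually, rotated])
      (use norm_tensor_eval_le[OF us_cbilinear_map_theta \<open>0 < C\<close> C] in blast)
  define \<Theta> where "\<Theta> N = (\<Sum>n<N. theta (fst (t n)) (snd (t n)))" for N
  define \<Xi> where "\<Xi> N = (\<Sum>n<N. theta (- snd (t n)) (fst (t n)) - theta (fst (t n)) (snd (t n)))" for N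
  have "tensor_eval theta (us_flip_tensor t N) = \<Theta> N + \<Theta> N + \<Xi> N" for N
    using tensor_eval_cong[OF us_cbilinear_map_theta us_flip_tensor_eq_concat]
    by (simp add: tensor_eval_concat_upt atLeast0LessThan \<Theta>_def \<Xi>_def flip: sum.distrib)
  then have half: "\<Theta> N - (1/2) *\<^sub>R tensor_eval theta (us_flip_tensor t N) = - ((1/2) *\<^sub>R \<Xi> N)" for N
    by (simp add: scaleR_add_right flip: scaleR_add_left)
  have "\<Theta> \<longlonglongrightarrow> theta_tensor t"
    unfolding \<Theta>_def theta_tensor_def by (intro summable_LIMSEQ summable_tensor_rep[OF t C])
  then have "(\<lambda>N. \<Theta> N - (1/2) *\<^sub>R tensor_eval theta (us_flip_tensor t N)) \<longlonglongrightarrow> theta_tensor t - (1/2) *\<^sub>R 0"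
    by (intro tendsto_diff tendsto_scaleR tendsto_const eval0)
  then have "(\<lambda>N. - ((1/2) *\<^sub>R \<Xi> N)) \<longlonglongrightarrow> theta_tensor t"
    unfolding half by simp
  moreover have "- ((1/2) *\<^sub>R \<Xi> N) \<in> X" for N
  proof -
    have "\<Xi> N \<in> X"
      unfolding \<Xi>_def by (intro cvec.subspace_sum[OF subspace] theta_flip_mem[OF X inner])
    then show ?thesis
      using cvec.subspace_neg[OF subspace cvec.subspace_scale[OF subspace, of _ "of_real (1/2)"]]
      by (simp only: scaleC_of_real)
  qed
  moreover have "closed X"
    using X by (simp add: closed_subbimodule_def)
  ultimately show ?thesis
    by (intro Lim_in_closed_set[OF _ always_eventually trivial_limit_sequentially]) auto
qed

lemma derivation_double_mem:
  fixes t :: "'i \<Rightarrow> nat \<Rightarrow> ('a \<times> complex) \<times> ('a \<times> complex)"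
  assumes spa: "us_sym_approx_diag F t" and X: "closed_subbimodule lm rm X"
    and inner: "\<And>a b. lm a (\<delta> b) - rm (\<delta> b) a \<in> X"
  shows "ud x + ud x \<in> X"
proof -
  have "F \<noteq> bot" and rep: "\<And>i. us_tensor_rep (t i)" and sym: "\<And>i. us_symmetric (t i)"
    and comm: "((\<lambda>i. us_comm_norm x (t i)) \<longlongrightarrow> 0) F"
    using spa unfolding us_sym_approx_diag_def by blast+
  obtain C where "0 < C" and C: "\<And>b c. norm (theta b c) \<le> C * (us_norm b * us_norm c)"
    using theta_bounded by blast
  define W where "W = (\<lambda>i. urm (ud x) (us_pi (t i)) + ulm (us_pi (t i)) (ud x))"
  define z where "z i = urm (theta_tensor (t i)) x - ulm x (theta_tensor (t i))" for i
  have "(W \<longlongrightarrow> ud x + ud x) F"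
    using tendsto_add[OF urm.tendsto[OF tendsto_const us_pi_tendsto_unit[OF spa]]
        ulm.tendsto[OF us_pi_tendsto_unit[OF spa] tendsto_const]]
    by (simp add: W_def)
  moreover have "((\<lambda>i. W i - z i) \<longlongrightarrow> 0) F"
  proof (rule Lim_null_comparison[OF always_eventually])
    show "((\<lambda>i. C * us_comm_norm x (t i)) \<longlongrightarrow> 0) F"
      by (rule tendsto_mult_right_zero[OF comm])
    show "\<forall>i. norm (W i - z i) \<le> C * us_comm_norm x (t i)"
      using norm_theta_commutator_le[OF rep \<open>0 < C\<close> C] by (simp add: W_def z_def diff_diff_eq2)
  qed
  ultimately have "((\<lambda>i. W i - (W i - z i)) \<longlongrightarrow> ud x + ud x - 0) F"
    by (rule tendsto_diff)
  then have "(z \<longlongrightarrow> ud x + ud x) F"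
    by simp
  moreover have "eventually (\<lambda>i. z i \<in> X) F"
    using theta_tensor_mem[OF X inner rep sym] unfolding z_def
    by (intro always_eventually allI cvec.subspace_diff[OF closed_subbimodule_subspace[OF X]]
        urm_mem[OF X] ulm_mem[OF X])
  moreover have "closed X"
    using X by (simp add: closed_subbimodule_def)
  ultimately show ?thesis
    using Lim_in_closed_set \<open>F \<noteq> bot\<close> by blast
qed

lemma derivation_range_subset:
  fixes t :: "'i \<Rightarrow> nat \<Rightarrow> ('a \<times> complex) \<times> ('a \<times> complex)"
  assumes spa: "us_sym_approx_diag F t" and X: "closed_subbimodule lm rm X"
    and inner: "\<And>a b. lm a (\<delta> b) - rm (\<delta> b) a \<in> X"
  shows "\<delta> a \<in> X"
proof -
  have "scaleC (1/2) (ud (a, 0) + ud (a, 0)) \<in> X"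
    by (intro cvec.subspace_scale closed_subbimodule_subspace[OF X] derivation_double_mem[OF spa X inner])
  then show ?thesis
    by (simp add: scaleC_half_double ud_def)
qed

end

theorem lemma6p3:
  fixes lm :: "'a::{cnormed_algebra, complete_space} \<Rightarrow> 'y::{cnormed, complete_space} \<Rightarrow> 'y"
    and rm :: "'y \<Rightarrow> 'a \<Rightarrow> 'y"
    and X :: "'y set"
    and \<delta> \<tau> :: "'a \<Rightarrow> 'y"
    and F :: "'i filter"
    and t :: "'i \<Rightarrow> nat \<Rightarrow> ('a \<times> complex) \<times> ('a \<times> complex)"
  assumes spa: "us_sym_approx_diag F t"
    and bimod: "banach_bimodule lm rm"
    and sub: "closed_subbimodule lm rm X"
    and der: "derivation lm rm \<delta>" and bdd: "bounded_map \<delta>"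
    and lin: "clinear_map \<tau>" and cent: "\<forall>a. \<tau> a \<in> zcenter lm rm UNIV"
    and sumX: "\<forall>a. \<delta> a + \<tau> a \<in> X"
  shows "(\<forall>a. \<delta> a \<in> X) \<and> (\<forall>a. \<tau> a \<in> zcenter lm rm X)"
proof -
  interpret bimod_derivation lm rm \<delta>
    using bimod der bdd by (simp add: bimod_derivation_def banach_bimod_def bimod_derivation_axioms_def)
  have subspace: "cvec.subspace X"
    using sub by (rule closed_subbimodule_subspace)
  have "lm a (\<delta> b) - rm (\<delta> b) a \<in> X" for a b
  proof -
    have "lm a (\<delta> b) - rm (\<delta> b) a = lm a (\<delta> b + \<tau> b) - rm (\<delta> b + \<tau> b) a"
      using cent by (simp add: zcenter_def lm.add_right rm.add_left)
    then show ?thesis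
      using sumX sub cvec.subspace_diff[OF subspace] unfolding closed_subbimodule_def by simp
  qed
  then have \<delta>_mem: "\<delta> a \<in> X" for a
    by (rule derivation_range_subset[OF spa sub])
  have "\<tau> a = (\<delta> a + \<tau> a) - \<delta> a" for a by simp
  then have "\<tau> a \<in> X" for a
    using cvec.subspace_diff[OF subspace] sumX \<delta>_mem by metis
  with cent \<delta>_mem show ?thesis
    by (simp add: zcenter_def)
qed
end
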